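(* Fix $\omega\in\Omega_*$. Let $h:\mathbb R^d\to\mathbb R$ be continuous with $|h(x)|\le c/(1+|x|^{d+1})$ for all $x$ and some constant $c$, and suppose $h^\varepsilon_\omega\in L^2(\mu^\varepsilon_\omega)$ converges strongly to $h\in L^2(m\,dx)$. Then $$\lim_{\varepsilon\downarrow0}\int_{\mathbb R^d}|h^\varepsilon_\omega(x)-h(x)|^2\mu^\varepsilon_\omega(dx)=0 .$$
   Context: Setting: $d\ge2$, $c_0>0$, $\mathbb E_d$ non-oriented nearest-neighbour bonds of $\mathbb Z^d$, $\Omega=[0,c_0]^{\mathbb E_d}$ (product topology), $\omega(x,y)=\omega(\{x,y\})$, $\tau_x\omega(\{y,z\})=\omega(\{y+x,z+x\})$. $\mathbb Q$ Borel probability on $\Omega$, invariant and ergodic under $(\tau_x)$. $\Omega_0$: the $\omega$ for which the graph of bonds with $\omega(b)>0$ has a unique infinite cluster, vertex set $\mathcal C(\omega)$; $\mathbb Q(\Omega_0)=1$; $m=\mathbb Q(0\in\mathcal C(\omega))$. $\mathcal B=\{e\in\mathbb Z^d:|e|=1\}$. $\mu^\varepsilon_\omega=\varepsilon^d\sum_{x\in\mathcal C(\omega)}\delta_{\varepsilon x}$. Convergence: $g^\varepsilon\in L^2(\mu^\varepsilon_\omega)$ converges weakly to $g\in L^2(m\,dx)$ if $\sup_\varepsilon\|g^\varepsilon\|_{L^2(\mu^\varepsilon_\omega)}<\infty$ and $\int g^\varepsilon\varphi\,d\mu^\varepsilon_\omega\to\int g\varphi\,m\,dx$ for all $\varphi\in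 C_c^\infty(\mathbb R^d)$; it converges strongly if $\sup_\varepsilon\|g^\varepsilon\|<\infty$ and $\int g^\varepsilon\varphi^\varepsilon d\mu^\varepsilon_\omega\to\int g\varphi\,m\,dx$ for every family $\varphi^\varepsilon\in L^2(\mu^\varepsilon_\omega)$ converging weakly to $\varphi$. $\mu(d\omega)=\mathbb 1_{\{0\in\mathcal C(\omega)\}}\mathbb Q(d\omega)$; $\int v\,dM=\sum_{e\in\mathcal B}\int\omega(0,e)v(\omega,e)\mu(d\omega)$; $\hat\omega(0,e)=\mathbb 1_{\{\omega(0,e)>0\}}$; $\nabla^{(\omega)}u(\omega,e)=\hat\omega(0,e)[u(\tau_e\omega)-u(\omega)]$; $\nabla^{(\omega)*}v(\omega)=\sum_e\omega(0,e)[v(\omega,e)-v(\tau_e\omega,-e)]$; $L^2_{\rm sol}(M)$ is the orthogonal complement of the closure of gradients of local functions. Regular environments: fix $(\psi_j)$ dense in $L^2_{\rm sol}(M)$ (fixed representatives), $\Psi_{j,e}(\omega)=\sqrt{\omega(0,e)}\psi_j(\omega,e)$, and continuous $f^{(k)}_{j,e}\to\Psi_{j,e}$ in $L^2(\mu)$. $\Omega_{*,j}$: $\omega\in\Omega_0$ with $\nabla^{(\omega)*}\psi_j(\tau_x\omega)=0$ for all $x\in\mathcal C(\omega)$ and $\lim_{\varepsilon\downarrow0}\int_{[-n,n]^d}(f^{(k)}_{j,e}-\Psi_{j,e})^2(\tau_{z/\varepsilon}\omega)\mu^\varepsilon_\omega(dz)=(2n)^d\|f^{(k)}_{j,e}-\Psi_{j,e}\|^2_{L^2(\mu)}$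 for all $e,k,n$. $\Omega_1$: $\omega\in\Omega_0$ with $\mu^\varepsilon_\omega([-\ell,\ell]^d)\to m(2\ell)^d$ for all $\ell>0$ and $\int\varphi(z)u(\tau_{z/\varepsilon}\omega)\mu^\varepsilon_\omega(dz)\to\int\varphi\,dz\int u\,d\mu$ for all $\varphi\in C_c(\mathbb R^d)$, $u\in C(\Omega)$. $\Omega_*=\Omega_1\cap\bigcap_j\Omega_{*,j}$. *)

theory Defs
  imports "HOL-Analysis.Analysis" "HOL-Probability.Probability"
begin

type_synonym 'd env = "(int ^ 'd) set \<Rightarrow> real"

definition unitB :: "(int ^ 'd::finite) set" where
  "unitB = {e. (\<Sum>i\<in>UNIV. (e $ i)^2) = 1}"

definition bonds :: "(int ^ 'd::finite) set set" where
  "bonds = {{x, y} | x y. y - x \<in> unitB}"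

text \<open>Omega = [0,c0]^(E_d) with the product sigma-algebra (= Borel sigma-algebra of the
  product topology, since the product is countable).\<close>
definition OmegaM :: "real \<Rightarrow> ('d::finite) env measure" where
  "OmegaM c0 = PiM bonds (\<lambda>_. restrict_space borel {0..c0})"

definition Omega :: "real \<Rightarrow> ('d::finite) env set" where
  "Omega c0 = space (OmegaM c0)"

definition shift :: "int ^ 'd::finite \<Rightarrow> 'd env \<Rightarrow> 'd env" where
  "shift x \<omega> = (\<lambda>b. if b \<in> bonds then \<omega> ((\<lambda>y. y + x) ` b) else undefined)"

definition adj :: "('d::finite) env \<Rightarrow> int ^ 'd \<Rightarrow> int ^ 'd \<Rightarrow> bool" where
  "adj \<omega> x y \<longleftrightarrow> {x, y} \<in> bonds \<and> \<omega> {x, y} > 0"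

definition cluster :: "('d::finite) env \<Rightarrow> int ^ 'd \<Rightarrow> (int ^ 'd) set" where
  "cluster \<omega> x = {y. (adj \<omega>)\<^sup>*\<^sup>* x y}"

definition Omega0 :: "real \<Rightarrow> ('d::finite) env set" where
  "Omega0 c0 = {\<omega> \<in> Omega c0. \<exists>!C. (\<exists>x. C = cluster \<omega> x) \<and> infinite C}"

text \<open>The vertex set C(omega) of the unique infinite cluster (meaningful on Omega0).\<close>
definition Cinf :: "('d::finite) env \<Rightarrow> (int ^ 'd) set" where
  "Cinf \<omega> = (THE C. (\<exists>x. C = cluster \<omega> x) \<and> infinite C)"

definition mdens :: "('d::finite) env measure \<Rightarrow> real \<Rightarrow> real" where
  "mdens Q c0 = measure Q {\<omega> \<in> Omega0 c0. 0 \<in> Cinf \<omega>}"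

definition muQ :: "('d::finite) env measure \<Rightarrow> real \<Rightarrow> 'd env measure" where
  "muQ Q c0 = density Q (indicator {\<omega> \<in> Omega0 c0. 0 \<in> Cinf \<omega>})"

definition Mmeas :: "('d::finite) env measure \<Rightarrow> real \<Rightarrow> ('d env \<times> (int ^ 'd)) measure" where
  "Mmeas Q c0 = density (muQ Q c0 \<Otimes>\<^sub>M count_space unitB) (\<lambda>(\<omega>, e). ennreal (\<omega> {0, e}))"

definition ohat :: "('d::finite) env \<Rightarrow> int ^ 'd \<Rightarrow> real" where
  "ohat \<omega> e = (if \<omega> {0, e} > 0 then 1 else 0)"

definition grad :: "(('d::finite) env \<Rightarrow> real) \<Rightarrow> 'd env \<times> (int ^ 'd) \<Rightarrow> real" where
  "grad u = (\<lambda>(\<omega>, e). ohat \<omega> e * (u (shift e \<omega>) - u \<omega>))"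

definition div_star :: "(('d::finite) env \<times> (int ^ 'd) \<Rightarrow> real) \<Rightarrow> 'd env \<Rightarrow> real" where
  "div_star v \<omega> = (\<Sum>e\<in>unitB. \<omega> {0, e} * (v (\<omega>, e) - v (shift e \<omega>, - e)))"

definition local_fun :: "('d::finite) env measure \<Rightarrow> real \<Rightarrow> ('d env \<Rightarrow> real) \<Rightarrow> bool" where
  "local_fun Q c0 u \<longleftrightarrow> u \<in> borel_measurable Q \<and> bounded (u ` Omega c0) \<and>
     (\<exists>F. finite F \<and> F \<subseteq> bonds \<and>
        (\<forall>\<omega>\<in>Omega c0. \<forall>\<omega>'\<in>Omega c0. (\<forall>b\<in>F. \<omega> b = \<omega>' b) \<longrightarrow> u \<omega> = u \<omega>'))"

definition L2 :: "'a measure \<Rightarrow> ('a \<Rightarrow> real) \<Rightarrow> bool" where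
  "L2 M v \<longleftrightarrow> v \<in> borel_measurable M \<and> integrable M (\<lambda>z. (v z)^2)"

text \<open>L^2_sol(M): orthogonal complement (in L^2(M)) of the closure of gradients of local
  functions, i.e. of the gradients of local functions themselves.\<close>
definition L2sol :: "('d::finite) env measure \<Rightarrow> real \<Rightarrow> ('d env \<times> (int ^ 'd) \<Rightarrow> real) set" where
  "L2sol Q c0 = {v. L2 (Mmeas Q c0) v \<and>
     (\<forall>u. local_fun Q c0 u \<longrightarrow> (LINT z|Mmeas Q c0. v z * grad u z) = 0)}"

definition Psi :: "(nat \<Rightarrow> ('d::finite) env \<times> (int ^ 'd) \<Rightarrow> real) \<Rightarrow> nat \<Rightarrow> int ^ 'd \<Rightarrow> 'd env \<Rightarrow> real" where
  "Psi \<psi> j e \<omega> = sqrt (\<omega> {0, e}) * \<psi> j (\<omega>, e)"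

definition emb :: "int ^ 'd::finite \<Rightarrow> real ^ 'd" where
  "emb x = (\<chi> i. real_of_int (x $ i))"

definition cube :: "real \<Rightarrow> (real ^ 'd::finite) set" where
  "cube r = {z. \<forall>i. \<bar>z $ i\<bar> \<le> r}"

text \<open>Integral against mu^eps_omega = eps^d sum_{x in C(omega)} delta_{eps x}.\<close>
definition eps_int :: "('d::finite) env \<Rightarrow> real \<Rightarrow> (real ^ 'd \<Rightarrow> real) \<Rightarrow> real" where
  "eps_int \<omega> \<epsilon> g = \<epsilon> ^ CARD('d) * (\<Sum>\<^sub>\<infinity>x\<in>Cinf \<omega>. g (\<epsilon> *\<^sub>R emb x))"

text \<open>int G(z, tau_{z/eps} omega) mu^eps_omega(dz).\<close>
definition eps_int_sh :: "('d::finite) env \<Rightarrow> real \<Rightarrow> (real ^ 'd \<Rightarrow> 'd env \<Rightarrow> real) \<Rightarrow> real" where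
  "eps_int_sh \<omega> \<epsilon> G = \<epsilon> ^ CARD('d) * (\<Sum>\<^sub>\<infinity>x\<in>Cinf \<omega>. G (\<epsilon> *\<^sub>R emb x) (shift x \<omega>))"

definition L2eps :: "('d::finite) env \<Rightarrow> real \<Rightarrow> (real ^ 'd \<Rightarrow> real) \<Rightarrow> bool" where
  "L2eps \<omega> \<epsilon> g \<longleftrightarrow> (\<lambda>x. (g (\<epsilon> *\<^sub>R emb x))^2) summable_on Cinf \<omega>"

definition pdiff :: "'d::finite \<Rightarrow> (real ^ 'd \<Rightarrow> real) \<Rightarrow> real ^ 'd \<Rightarrow> real" where
  "pdiff i f x = deriv (\<lambda>t. f (x + t *\<^sub>R axis i 1)) 0"

fun iter_pdiff :: "'d::finite list \<Rightarrow> (real ^ 'd \<Rightarrow> real) \<Rightarrow> real ^ 'd \<Rightarrow> real" where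
  "iter_pdiff [] f = f"
| "iter_pdiff (i # is) f = pdiff i (iter_pdiff is f)"

definition smooth :: "(real ^ 'd::finite \<Rightarrow> real) \<Rightarrow> bool" where
  "smooth f \<longleftrightarrow> (\<forall>is. continuous_on UNIV (iter_pdiff is f) \<and>
     (\<forall>i x. (\<lambda>t. iter_pdiff is f (x + t *\<^sub>R axis i 1)) differentiable (at 0)))"

definition Cc :: "(real ^ 'd::finite \<Rightarrow> real) \<Rightarrow> bool" where
  "Cc f \<longleftrightarrow> continuous_on UNIV f \<and> compact (closure {z. f z \<noteq> 0})"

definition Cc_inf :: "(real ^ 'd::finite \<Rightarrow> real) \<Rightarrow> bool" where
  "Cc_inf f \<longleftrightarrow> smooth f \<and> compact (closure {z. f z \<noteq> 0})"

definition weak_conv :: "real \<Rightarrow> ('d::finite) env \<Rightarrow> (real \<Rightarrow> real ^ 'd \<Rightarrow> real) \<Rightarrow> (real ^ 'd \<Rightarrow> real) \<Rightarrow> bool" where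
  "weak_conv m \<omega> g\<epsilon> g \<longleftrightarrow>
     (\<forall>\<epsilon>>0. L2eps \<omega> \<epsilon> (g\<epsilon> \<epsilon>)) \<and>
     (\<exists>B. eventually (\<lambda>\<epsilon>. eps_int \<omega> \<epsilon> (\<lambda>z. (g\<epsilon> \<epsilon> z)^2) \<le> B) (at_right 0)) \<and>
     L2 lborel g \<and>
     (\<forall>\<phi>. Cc_inf \<phi> \<longrightarrow>
        ((\<lambda>\<epsilon>. eps_int \<omega> \<epsilon> (\<lambda>z. g\<epsilon> \<epsilon> z * \<phi> z)) \<longlongrightarrow> m * (LINT x|lborel. g x * \<phi> x)) (at_right 0))"

definition strong_conv :: "real \<Rightarrow> ('d::finite) env \<Rightarrow> (real \<Rightarrow> real ^ 'd \<Rightarrow> real) \<Rightarrow> (real ^ 'd \<Rightarrow> real) \<Rightarrow> bool" where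
  "strong_conv m \<omega> g\<epsilon> g \<longleftrightarrow>
     (\<forall>\<epsilon>>0. L2eps \<omega> \<epsilon> (g\<epsilon> \<epsilon>)) \<and>
     (\<exists>B. eventually (\<lambda>\<epsilon>. eps_int \<omega> \<epsilon> (\<lambda>z. (g\<epsilon> \<epsilon> z)^2) \<le> B) (at_right 0)) \<and>
     L2 lborel g \<and>
     (\<forall>\<phi>\<epsilon> \<phi>. weak_conv m \<omega> \<phi>\<epsilon> \<phi> \<longrightarrow>
        ((\<lambda>\<epsilon>. eps_int \<omega> \<epsilon> (\<lambda>z. g\<epsilon> \<epsilon> z * \<phi>\<epsilon> \<epsilon> z)) \<longlongrightarrow> m * (LINT x|lborel. g x * \<phi> x)) (at_right 0))"

definition Omega1 :: "('d::finite) env measure \<Rightarrow> real \<Rightarrow> 'd env set" where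
  "Omega1 Q c0 = {\<omega> \<in> Omega0 c0.
     (\<forall>l>0. ((\<lambda>\<epsilon>. eps_int \<omega> \<epsilon> (indicator (cube l)))
              \<longlongrightarrow> mdens Q c0 * (2 * l) ^ CARD('d)) (at_right 0)) \<and>
     (\<forall>\<phi> u. Cc \<phi> \<and> continuous_on (Omega c0) u \<longrightarrow>
        ((\<lambda>\<epsilon>. eps_int_sh \<omega> \<epsilon> (\<lambda>z \<omega>'. \<phi> z * u \<omega>'))
           \<longlongrightarrow> (LINT z|lborel. \<phi> z) * (LINT \<omega>'|muQ Q c0. u \<omega>')) (at_right 0))}"

definition OmegaStar_j :: "('d::finite) env measure \<Rightarrow> real \<Rightarrow> (nat \<Rightarrow> 'd env \<times> (int ^ 'd) \<Rightarrow> real)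
    \<Rightarrow> (nat \<Rightarrow> int ^ 'd \<Rightarrow> nat \<Rightarrow> 'd env \<Rightarrow> real) \<Rightarrow> nat \<Rightarrow> 'd env set" where
  "OmegaStar_j Q c0 \<psi> f j = {\<omega> \<in> Omega0 c0.
     (\<forall>x\<in>Cinf \<omega>. div_star (\<psi> j) (shift x \<omega>) = 0) \<and>
     (\<forall>e\<in>unitB. \<forall>k. \<forall>n::nat. n \<ge> 1 \<longrightarrow>
        ((\<lambda>\<epsilon>. eps_int_sh \<omega> \<epsilon> (\<lambda>z \<omega>'. indicator (cube (real n)) z * (f j e k \<omega>' - Psi \<psi> j e \<omega>')^2))
          \<longlongrightarrow> (2 * real n) ^ CARD('d) * (LINT \<omega>'|muQ Q c0. (f j e k \<omega>' - Psi \<psi> j e \<omega>')^2))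
        (at_right 0))}"

definition OmegaStar :: "('d::finite) env measure \<Rightarrow> real \<Rightarrow> (nat \<Rightarrow> 'd env \<times> (int ^ 'd) \<Rightarrow> real)
    \<Rightarrow> (nat \<Rightarrow> int ^ 'd \<Rightarrow> nat \<Rightarrow> 'd env \<Rightarrow> real) \<Rightarrow> 'd env set" where
  "OmegaStar Q c0 \<psi> f = Omega1 Q c0 \<inter> (\<Inter>j. OmegaStar_j Q c0 \<psi> f j)"

end

theory Submission
  imports Defs
begin

text \<open>Expand \<open>\<integral> |h\<^sup>\<epsilon> - h|\<^sup>2 d\<mu>\<^sup>\<epsilon>\<^sub>\<omega>\<close> as \<open>\<integral> (h\<^sup>\<epsilon>)\<^sup>2 - 2 \<integral> h\<^sup>\<epsilon> h + \<integral> h\<^sup>2\<close>.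
  Strong convergence tested against \<open>h\<^sup>\<epsilon>\<close> itself (which converges weakly, by testing against
  constant families of smooth functions) and against the constant family \<open>h\<close> sends the first two
  terms to \<open>m \<integral> h\<^sup>2\<close>. For the third term, the ergodic averages defining \<open>\<Omega>\<^sub>1\<close> handle a compactly
  supported truncation of \<open>h\<^sup>2\<close>; the decay \<open>|h(x)| \<le> c/(1+|x|\<^sup>d\<^sup>+\<^sup>1)\<close> dominates \<open>h\<^sup>2\<close> by a
  product weight \<open>\<Prod>\<^sub>i (1+|x\<^sub>i|)\<^sup>-\<^sup>2\<close> times \<open>1/(1+|x|)\<close>, whose lattice sums \<open>\<epsilon>\<^sup>d \<Sum>\<close> stay bounded, so the
  tail of the truncation is uniformly small.\<close>

lemma cube_eq_cbox: "cube r = cbox (- vec r) (vec r :: real ^ 'd::finite)"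
  unfolding set_eq_iff cube_def mem_box_cart mem_Collect_eq
  by (intro allI iff_allI) (auto simp: abs_le_iff)

lemma compact_cube: "compact (cube r)"
  by (simp add: cube_eq_cbox)

lemma measure_cube:
  assumes "r \<ge> 0"
  shows "measure lborel (cube r :: (real ^ 'd::finite) set) = (2 * r) ^ CARD('d)"
proof -
  have "0 \<in> cbox (- vec r) (vec r :: real ^ 'd)" using assms by (simp add: mem_box_cart)
  then have "cbox (- vec r) (vec r :: real ^ 'd) \<noteq> {}" by blast
  then show ?thesis by (simp add: cube_eq_cbox content_cbox_cart)
qed

lemma integrable_indicator_cube: "integrable lborel (indicator (cube r) :: real ^ 'd::finite \<Rightarrow> real)"
  using fmeasurable_compact[OF compact_cube] unfolding integrable_indicator_iff
  by (auto simp: fmeasurable_def)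

lemma integral_indicator_cube:
  "r \<ge> 0 \<Longrightarrow> (LINT z|lborel. indicator (cube r :: (real ^ 'd::finite) set) z :: real) = (2 * r) ^ CARD('d)"
  using measure_cube[where 'd='d] by simp

lemma int_box_eq_image:
  "{x::int ^ 'd::finite. \<forall>i. \<bar>x $ i\<bar> \<le> N} = vec_lambda ` PiE UNIV (\<lambda>_. {-N..N})"
proof
  show "{x::int ^ 'd. \<forall>i. \<bar>x $ i\<bar> \<le> N} \<subseteq> vec_lambda ` PiE UNIV (\<lambda>_. {-N..N})"
  proof
    fix x :: "int ^ 'd" assume "x \<in> {x. \<forall>i. \<bar>x $ i\<bar> \<le> N}"
    then have "(\<lambda>i. x $ i) \<in> PiE UNIV (\<lambda>_. {-N..N})"
      unfolding PiE_UNIV_domain Pi_iff by (auto simp: abs_le_iff minus_le_iff)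
    then show "x \<in> vec_lambda ` PiE UNIV (\<lambda>_. {-N..N})" by (metis image_eqI vec_nth_inverse)
  qed
  show "vec_lambda ` PiE UNIV (\<lambda>_. {-N..N}) \<subseteq> {x::int ^ 'd. \<forall>i. \<bar>x $ i\<bar> \<le> N}"
    by (fastforce simp: abs_le_iff minus_le_iff PiE_iff)
qed

lemma finite_int_box: "finite {x::int ^ 'd::finite. \<forall>i. \<bar>x $ i\<bar> \<le> N}"
  unfolding int_box_eq_image by (simp add: finite_PiE)

lemma finite_subset_int_box:
  assumes "finite (F :: (int ^ 'd::finite) set)"
  obtains N where "N \<ge> 0" "F \<subseteq> {x. \<forall>i. \<bar>x $ i\<bar> \<le> N}"
proof -
  let ?N = "\<Sum>x\<in>F. \<Sum>i\<in>UNIV. \<bar>x $ i\<bar>"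
  have "\<bar>x $ i\<bar> \<le> ?N" if "x \<in> F" for x i
  proof -
    have "\<bar>x $ i\<bar> \<le> (\<Sum>i\<in>UNIV. \<bar>x $ i\<bar>)" by (rule member_le_sum) auto
    also have "\<dots> \<le> ?N" using assms that by (intro member_le_sum) (auto intro: sum_nonneg)
    finally show ?thesis .
  qed
  moreover have "?N \<ge> 0" by (intro sum_nonneg) auto
  ultimately show ?thesis using that by blast
qed

lemma finite_lattice_points_in_cube:
  assumes "\<epsilon> > 0"
  shows "finite {x::int ^ 'd::finite. \<epsilon> *\<^sub>R emb x \<in> cube r}"
proof -
  have "{x::int ^ 'd. \<epsilon> *\<^sub>R emb x \<in> cube r} \<subseteq> {x. \<forall>i. \<bar>x $ i\<bar> \<le> \<lceil>r / \<epsilon>\<rceil>}"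
  proof safe
    fix x :: "int ^ 'd" and i assume "\<epsilon> *\<^sub>R emb x \<in> cube r"
    then have "\<bar>\<epsilon> * real_of_int (x $ i)\<bar> \<le> r" by (auto simp: cube_def emb_def)
    then have "\<bar>real_of_int (x $ i)\<bar> \<le> r / \<epsilon>" using assms
      by (simp add: abs_mult pos_le_divide_eq mult.commute)
    then show "\<bar>x $ i\<bar> \<le> \<lceil>r / \<epsilon>\<rceil>" by linarith
  qed
  then show ?thesis using finite_int_box finite_subset by blast
qed

lemma summable_on_lattice_if_vanishes_outside_cube:
  fixes g :: "real ^ 'd::finite \<Rightarrow> real"
  assumes "\<epsilon> > 0" "\<And>z. z \<notin> cube r \<Longrightarrow> g z = 0"
  shows "(\<lambda>x. g (\<epsilon> *\<^sub>R emb x)) summable_on A"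
proof -
  let ?F = "{x::int ^ 'd. \<epsilon> *\<^sub>R emb x \<in> cube r}"
  have "(\<lambda>x. g (\<epsilon> *\<^sub>R emb x)) summable_on (A \<inter> ?F)"
    using finite_lattice_points_in_cube[OF assms(1), of r]
    by (intro summable_on_finite) (rule finite_subset[OF Int_lower2])
  moreover have "(\<lambda>x. g (\<epsilon> *\<^sub>R emb x)) summable_on A \<longleftrightarrow> (\<lambda>x. g (\<epsilon> *\<^sub>R emb x)) summable_on (A \<inter> ?F)"
    by (rule summable_on_cong_neutral) (use assms(2) in auto)
  ultimately show ?thesis by simp
qed

lemma eps_int_mono:
  assumes "\<epsilon> > 0" "(\<lambda>x. f (\<epsilon> *\<^sub>R emb x)) summable_on Cinf \<omega>" "(\<lambda>x. g (\<epsilon> *\<^sub>R emb x)) summable_on Cinf \<omega>"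
    and "\<And>z. f z \<le> g z"
  shows "eps_int \<omega> \<epsilon> f \<le> eps_int \<omega> \<epsilon> g"
  unfolding eps_int_def using assms by (intro mult_left_mono infsum_mono) auto

section \<open>A summable product weight\<close>

definition inv_sq_weight :: "real \<Rightarrow> real" where
  "inv_sq_weight s = 1 / (1 + \<bar>s\<bar>)^2"

definition prod_weight :: "real ^ 'd::finite \<Rightarrow> real" where
  "prod_weight z = (\<Prod>i\<in>UNIV. inv_sq_weight (z $ i))"

lemma inv_sq_weight_nonneg: "inv_sq_weight s \<ge> 0"
  by (simp add: inv_sq_weight_def)

lemma prod_weight_nonneg: "prod_weight z \<ge> 0"
  by (simp add: prod_weight_def inv_sq_weight_nonneg prod_nonneg)

text \<open>Comparison with the telescoping sum \<open>\<Sum> 1/(a\<^sub>k a\<^sub>k\<^sub>+\<^sub>1)\<close>, \<open>a\<^sub>k = 1 + \<epsilon> k\<close>.\<close>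
lemma sum_inv_sq_weight_symmetric_le:
  assumes "\<epsilon> > 0"
  shows "(\<Sum>n\<in>{-int k..int k}. inv_sq_weight (\<epsilon> * of_int n)) \<le> 1 + (2 / \<epsilon>) * (1 - 1 / (1 + \<epsilon> * k))"
proof (induction k)
  case 0
  then show ?case by (simp add: inv_sq_weight_def)
next
  case (Suc k)
  let ?a = "1 + \<epsilon> * real k" and ?b = "1 + \<epsilon> * real (Suc k)"
  have a: "?a > 0" and b: "?b > 0" and ab: "?b = ?a + \<epsilon>"
    using assms by (auto simp: algebra_simps add_pos_nonneg)
  have "{-int (Suc k)..int (Suc k)} = insert (-int (Suc k)) (insert (int (Suc k)) {-int k..int k})"
    by auto
  then have sum: "(\<Sum>n\<in>{-int (Suc k)..int (Suc k)}. inv_sq_weight (\<epsilon> * of_int n))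
      = (\<Sum>n\<in>{-int k..int k}. inv_sq_weight (\<epsilon> * of_int n)) + 2 / ?b^2"
    using assms by (simp add: inv_sq_weight_def abs_mult add.commute)
  have "0 < ?b^2 * (?a * ?b)" using a b by simp
  then have "2 / ?b^2 \<le> 2 / (?a * ?b)"
    using a b assms by (intro divide_left_mono) (auto simp: power2_eq_square ab intro!: mult_right_mono)
  also have "\<dots> = (2 / \<epsilon>) * (1 / ?a - 1 / ?b)"
    using a b assms by (simp add: field_simps)
  finally show ?case using Suc.IH sum by (simp add: algebra_simps)
qed

lemma sum_inv_sq_weight_le:
  assumes "\<epsilon> > 0" "N \<ge> 0"
  shows "(\<Sum>n\<in>{-N..N}. inv_sq_weight (\<epsilon> * of_int n)) \<le> 1 + 2 / \<epsilon>"
proof -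
  have "(\<Sum>n\<in>{-N..N}. inv_sq_weight (\<epsilon> * of_int n)) \<le> 1 + (2 / \<epsilon>) * (1 - 1 / (1 + \<epsilon> * nat N))"
    using sum_inv_sq_weight_symmetric_le[OF assms(1), of "nat N"] assms(2) by simp
  also have "\<dots> \<le> 1 + 2 / \<epsilon>" using assms by (simp add: field_simps)
  finally show ?thesis .
qed

lemma sum_prod_weight_int_box:
  "(\<Sum>x\<in>{x::int ^ 'd::finite. \<forall>i. \<bar>x $ i\<bar> \<le> N}. prod_weight (\<epsilon> *\<^sub>R emb x))
     = (\<Prod>i\<in>(UNIV::'d set). \<Sum>n\<in>{-N..N}. inv_sq_weight (\<epsilon> * of_int n))"
proof -
  have inj: "inj_on (vec_lambda :: ('d \<Rightarrow> int) \<Rightarrow> int ^ 'd) A" for A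
    by (rule inj_onI) (metis vec_lambda_inverse UNIV_I)
  have "(\<Sum>x\<in>{x::int ^ 'd. \<forall>i. \<bar>x $ i\<bar> \<le> N}. prod_weight (\<epsilon> *\<^sub>R emb x))
       = (\<Sum>f\<in>PiE UNIV (\<lambda>_. {-N..N}). \<Prod>i\<in>(UNIV::'d set). inv_sq_weight (\<epsilon> * of_int (f i)))"
    unfolding int_box_eq_image sum.reindex[OF inj] by (simp add: prod_weight_def emb_def)
  also have "\<dots> = (\<Prod>i\<in>(UNIV::'d set). \<Sum>n\<in>{-N..N}. inv_sq_weight (\<epsilon> * of_int n))"
    by (rule prod_sum_PiE[symmetric]) auto
  finally show ?thesis .
qed

lemma prod_weight_lattice_summable:
  assumes "\<epsilon> > 0"
  shows "(\<lambda>x::int ^ 'd::finite. prod_weight (\<epsilon> *\<^sub>R emb x)) summable_on UNIV"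
    and "infsum (\<lambda>x::int ^ 'd::finite. prod_weight (\<epsilon> *\<^sub>R emb x)) UNIV \<le> (1 + 2 / \<epsilon>) ^ CARD('d)"
proof -
  have finite_sums: "sum (\<lambda>x::int ^ 'd. prod_weight (\<epsilon> *\<^sub>R emb x)) F \<le> (1 + 2 / \<epsilon>) ^ CARD('d)"
    if F: "finite F" for F
  proof -
    obtain N where N: "N \<ge> 0" "F \<subseteq> {x. \<forall>i. \<bar>x $ i\<bar> \<le> N}"
      using finite_subset_int_box[OF F] by blast
    have "sum (\<lambda>x::int ^ 'd. prod_weight (\<epsilon> *\<^sub>R emb x)) F
        \<le> (\<Sum>x\<in>{x::int ^ 'd. \<forall>i. \<bar>x $ i\<bar> \<le> N}. prod_weight (\<epsilon> *\<^sub>R emb x))"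
      by (rule sum_mono2[OF finite_int_box N(2)]) (simp add: prod_weight_nonneg)
    also have "\<dots> = (\<Prod>i\<in>(UNIV::'d set). \<Sum>n\<in>{-N..N}. inv_sq_weight (\<epsilon> * of_int n))"
      by (rule sum_prod_weight_int_box)
    also have "\<dots> \<le> (\<Prod>i\<in>(UNIV::'d set). 1 + 2 / \<epsilon>)"
      using sum_inv_sq_weight_le[OF assms N(1)]
      by (intro prod_mono) (simp add: sum_nonneg inv_sq_weight_nonneg)
    finally show ?thesis by simp
  qed
  show summable: "(\<lambda>x::int ^ 'd. prod_weight (\<epsilon> *\<^sub>R emb x)) summable_on UNIV"
    by (rule nonneg_bdd_above_summable_on)
      (auto simp: prod_weight_nonneg bdd_above_def intro!: exI[of _ "(1 + 2 / \<epsilon>) ^ CARD('d)"] finite_sums)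
  show "infsum (\<lambda>x::int ^ 'd. prod_weight (\<epsilon> *\<^sub>R emb x)) UNIV \<le> (1 + 2 / \<epsilon>) ^ CARD('d)"
    by (rule infsum_le_finite_sums[OF summable finite_sums])
qed

lemma summable_on_lattice_if_le_prod_weight:
  fixes g :: "real ^ 'd::finite \<Rightarrow> real"
  assumes "\<epsilon> > 0" "\<And>z. 0 \<le> g z" "\<And>z. g z \<le> C * prod_weight z"
  shows "(\<lambda>x. g (\<epsilon> *\<^sub>R emb x)) summable_on A"
proof (rule summable_on_comparison_test)
  show "(\<lambda>x::int ^ 'd. C * prod_weight (\<epsilon> *\<^sub>R emb x)) summable_on A"
    using prod_weight_lattice_summable(1)[OF assms(1)]
    by (intro summable_on_cmult_right) (rule summable_on_subset, auto)
qed (use assms in auto)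

text \<open>For \<open>\<epsilon> \<le> 1\<close> the factor \<open>\<epsilon>\<^sup>d\<close> in \<open>eps_int\<close> compensates \<open>(1 + 2/\<epsilon>)\<^sup>d \<le> (3/\<epsilon>)\<^sup>d\<close>.\<close>
lemma eps_int_le_if_le_prod_weight:
  fixes g :: "real ^ 'd::finite \<Rightarrow> real"
  assumes "0 < \<epsilon>" "\<epsilon> \<le> 1" "C \<ge> 0" "\<And>z. 0 \<le> g z" "\<And>z. g z \<le> C * prod_weight z"
  shows "eps_int \<omega> \<epsilon> g \<le> C * 3 ^ CARD('d)"
proof -
  let ?W = "\<lambda>x::int ^ 'd. C * prod_weight (\<epsilon> *\<^sub>R emb x)"
  have summable_W: "?W summable_on A" for A
    using summable_on_lattice_if_le_prod_weight[OF assms(1), of "\<lambda>z. C * prod_weight z" C]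
      assms(3) by (simp add: prod_weight_nonneg)
  have "infsum (\<lambda>x. g (\<epsilon> *\<^sub>R emb x)) (Cinf \<omega>) \<le> infsum ?W (Cinf \<omega>)"
    by (rule infsum_mono[OF summable_on_lattice_if_le_prod_weight[OF assms(1,4,5)] summable_W])
      (rule assms(5))
  also have "\<dots> \<le> infsum ?W UNIV"
    by (rule infsum_mono2[OF summable_W summable_W]) (use assms(3) in \<open>auto simp: prod_weight_nonneg\<close>)
  also have "\<dots> = C * infsum (\<lambda>x::int ^ 'd. prod_weight (\<epsilon> *\<^sub>R emb x)) UNIV"
    by (rule infsum_cmult_right[OF prod_weight_lattice_summable(1)[OF assms(1)]])
  also have "\<dots> \<le> C * (3 / \<epsilon>) ^ CARD('d)"
  proof -
    have "1 + 2 / \<epsilon> \<le> 3 / \<epsilon>" using assms(1,2) by (simp add: field_simps)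
    then show ?thesis
      using assms(1,3) prod_weight_lattice_summable(2)[OF assms(1), where 'd='d]
      by (intro mult_left_mono) (auto intro: order_trans power_mono)
  qed
  finally have "eps_int \<omega> \<epsilon> g \<le> \<epsilon> ^ CARD('d) * (C * (3 / \<epsilon>) ^ CARD('d))"
    unfolding eps_int_def using assms(1) by (simp add: mult_left_mono)
  also have "\<dots> = C * 3 ^ CARD('d)" using assms(1) by (simp add: power_divide field_simps)
  finally show ?thesis .
qed

lemma one_plus_power_le:
  fixes t :: real
  assumes "t \<ge> 0"
  shows "(1 + t) ^ n \<le> 2 ^ n * (1 + t ^ n)"
proof (cases "t \<le> 1")
  case True
  then have "(1 + t) ^ n \<le> 2 ^ n" using assms by (intro power_mono) auto
  then show ?thesis using assms by (simp add: order_trans)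
next
  case False
  then have "(1 + t) ^ n \<le> (2 * t) ^ n" by (intro power_mono) auto
  then show ?thesis by (simp add: power_mult_distrib order_trans)
qed

lemma prod_weight_ge:
  fixes z :: "real ^ 'd::finite"
  shows "(1 / (1 + norm z)) ^ (2 * CARD('d)) \<le> prod_weight z"
proof -
  have "(1 / (1 + norm z)) ^ (2 * CARD('d)) = (\<Prod>i\<in>(UNIV::'d set). (1 / (1 + norm z))^2)"
    by (simp add: power_mult)
  also have "\<dots> \<le> (\<Prod>i\<in>UNIV. inv_sq_weight (z $ i))"
  proof (rule prod_mono, intro conjI)
    fix i
    have "1 / (1 + norm z) \<le> 1 / (1 + \<bar>z $ i\<bar>)"
      using component_le_norm_cart[of z i] by (intro divide_left_mono) auto
    then have "(1 / (1 + norm z))^2 \<le> (1 / (1 + \<bar>z $ i\<bar>))^2" by (rule power_mono) simp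
    then show "(1 / (1 + norm z))^2 \<le> inv_sq_weight (z $ i)"
      by (simp add: inv_sq_weight_def power_divide)
  qed simp
  finally show ?thesis by (simp add: prod_weight_def)
qed

text \<open>The exponent \<open>d + 1\<close> in the decay hypothesis is what leaves the extra factor
  \<open>1/(1+|z|)\<close>, beyond the \<open>(1+|z|)\<^sup>-\<^sup>2\<^sup>d\<close> absorbed by the product weight.\<close>
lemma sq_le_prod_weight_if_decay:
  fixes h :: "real ^ 'd::finite \<Rightarrow> real"
  assumes "\<forall>x. \<bar>h x\<bar> \<le> c / (1 + norm x ^ (CARD('d) + 1))"
  obtains C where "C \<ge> 0" "\<And>z. (h z)^2 \<le> C * prod_weight z / (1 + norm z)"
proof
  let ?n = "CARD('d) + 1"
  have c: "c \<ge> 0" using assms[rule_format, of 0] by simp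
  show "c^2 * 4 ^ ?n \<ge> 0" by simp
  fix z :: "real ^ 'd"
  define u where "u = 1 / (1 + norm z)"
  have u: "0 < u" "u \<le> 1" unfolding u_def by (auto simp: add_pos_nonneg)
  have "(1 + norm z) ^ ?n \<le> 2 ^ ?n * (1 + norm z ^ ?n)" by (rule one_plus_power_le) simp
  then have "1 / (1 + norm z ^ ?n) \<le> 2 ^ ?n * u ^ ?n"
    unfolding u_def by (simp add: field_simps power_divide add_pos_nonneg)
  then have "c / (1 + norm z ^ ?n) \<le> c * (2 ^ ?n * u ^ ?n)"
    using mult_left_mono[OF _ c] by fastforce
  then have "\<bar>h z\<bar> \<le> c * (2 ^ ?n * u ^ ?n)"
    using assms[rule_format, of z] by linarith
  then have "(h z)^2 \<le> (c * (2 ^ ?n * u ^ ?n))^2"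
    by (metis abs_ge_zero order_trans power2_abs power_mono)
  also have "\<dots> = c^2 * 4 ^ ?n * u ^ (2 * CARD('d)) * (u * u)"
  proof -
    have "((2::real) ^ ?n)^2 = 4 ^ ?n" by (simp add: power2_eq_square flip: power_mult_distrib)
    moreover have "(u ^ ?n)^2 = u ^ (2 * CARD('d)) * (u * u)"
    proof -
      have "(u ^ ?n)^2 = u ^ (?n * 2)" by (rule power_mult[symmetric])
      also have "?n * 2 = 2 * CARD('d) + 2" by simp
      finally show ?thesis by (simp only: power_add power2_eq_square)
    qed
    ultimately show ?thesis by (simp only: power_mult_distrib mult.assoc)
  qed
  also have "\<dots> \<le> c^2 * 4 ^ ?n * u ^ (2 * CARD('d)) * u"
    using u by (intro mult_left_mono) (auto simp: mult_le_cancel_right1)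
  also have "\<dots> \<le> c^2 * 4 ^ ?n * prod_weight z * u"
    using u prod_weight_ge[of z] unfolding u_def[symmetric] by (intro mult_right_mono mult_left_mono) auto
  finally show "(h z)^2 \<le> c^2 * 4 ^ ?n * prod_weight z / (1 + norm z)"
    by (simp add: u_def)
qed

lemma prod_weight_tail_bounds:
  fixes h :: "real ^ 'd::finite \<Rightarrow> real"
  assumes "C \<ge> 0" "\<And>z. (h z)^2 \<le> C * prod_weight z / (1 + norm z)"
  shows "(h z)^2 \<le> C * prod_weight z"
    and "R \<ge> 0 \<Longrightarrow> z \<notin> cube R \<Longrightarrow> (h z)^2 \<le> C / (1 + R) * prod_weight z"
proof -
  have W: "C * prod_weight z \<ge> 0" by (intro mult_nonneg_nonneg assms(1) prod_weight_nonneg)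
  show "(h z)^2 \<le> C * prod_weight z"
  proof -
    have "C * prod_weight z / (1 + norm z) \<le> C * prod_weight z / 1"
      using W by (intro divide_left_mono) (auto intro: add_pos_nonneg)
    then show ?thesis using assms(2)[of z] by simp
  qed
  assume R: "R \<ge> 0" "z \<notin> cube R"
  then obtain i where "\<bar>z $ i\<bar> > R" by (auto simp: cube_def not_le)
  then have "R \<le> norm z" using component_le_norm_cart[of z i] by simp
  then have "C * prod_weight z / (1 + norm z) \<le> C * prod_weight z / (1 + R)"
    using R W by (intro divide_left_mono) auto
  then show "(h z)^2 \<le> C / (1 + R) * prod_weight z" using assms(2)[of z] by simp
qed

lemma Cc_vanishes_outside_cube:
  fixes g :: "real ^ 'd::finite \<Rightarrow> real"
  assumes "Cc g"
  obtains r where "r \<ge> 0" "\<And>z. z \<notin> cube r \<Longrightarrow> g z = 0"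
proof -
  have "bounded (closure {z. g z \<noteq> 0})" using assms unfolding Cc_def by (simp add: compact_imp_bounded)
  then obtain r where r: "\<And>z. z \<in> closure {z. g z \<noteq> 0} \<Longrightarrow> norm z \<le> r"
    unfolding bounded_iff by blast
  have "g z = 0" if "z \<notin> cube (max r 0)" for z
  proof (rule ccontr)
    assume "g z \<noteq> 0"
    then have "z \<in> closure {z. g z \<noteq> 0}" by (meson closure_subset mem_Collect_eq subsetD)
    then have "norm z \<le> r" by (rule r)
    then have "\<bar>z $ i\<bar> \<le> max r 0" for i
      using component_le_norm_cart[of z i] by linarith
    then have "z \<in> cube (max r 0)" unfolding cube_def by simp
    with that show False by simp
  qed
  then show ?thesis using that[of "max r 0"] by simp
qed

lemma Cc_imp_integrable:
  fixes g :: "real ^ 'd::finite \<Rightarrow> real"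
  assumes "Cc g"
  shows "integrable lborel g"
proof -
  let ?S = "closure {z. g z \<noteq> 0}"
  have "integrable lborel (\<lambda>x. indicator ?S x *\<^sub>R g x)"
    using assms unfolding Cc_def by (intro borel_integrable_compact) (auto intro: continuous_on_subset)
  moreover have "indicator ?S x *\<^sub>R g x = g x" for x
    using closure_subset[of "{z. g z \<noteq> 0}"] by (cases "g x = 0") (auto simp: indicator_def)
  then have "(\<lambda>x. indicator ?S x *\<^sub>R g x) = g" by (rule ext)
  ultimately show ?thesis by simp
qed

lemma Cc_mult_continuous:
  assumes "Cc f" "continuous_on UNIV g"
  shows "Cc (\<lambda>z. f z * g z)" and "Cc (\<lambda>z. g z * f z)"
proof -
  have "bounded {z. f z \<noteq> 0}" using assms(1) unfolding Cc_def by simp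
  then have "bounded {z. f z * g z \<noteq> 0}" by (rule bounded_subset) auto
  then show "Cc (\<lambda>z. f z * g z)" using assms unfolding Cc_def by (auto intro: continuous_on_mult)
  then show "Cc (\<lambda>z. g z * f z)" by (simp add: mult.commute)
qed

lemma Cc_imp_L2eps:
  fixes g :: "real ^ 'd::finite \<Rightarrow> real"
  assumes "Cc g" "\<epsilon> > 0"
  shows "L2eps \<omega> \<epsilon> g"
proof -
  obtain r where "\<And>z. z \<notin> cube r \<Longrightarrow> g z = 0"
    using Cc_vanishes_outside_cube[OF assms(1)] by blast
  then show ?thesis unfolding L2eps_def
    by (intro summable_on_lattice_if_vanishes_outside_cube[OF assms(2), where r=r]) simp
qed

lemma Cc_imp_L2:
  fixes g :: "real ^ 'd::finite \<Rightarrow> real"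
  assumes "Cc g"
  shows "L2 lborel g"
proof -
  have cont: "continuous_on UNIV g" using assms by (simp add: Cc_def)
  then have "Cc (\<lambda>z. g z * g z)" using assms by (intro Cc_mult_continuous)
  then have "integrable lborel (\<lambda>z. (g z)^2)" by (simp add: power2_eq_square Cc_imp_integrable)
  moreover have "g \<in> borel_measurable lborel" using borel_measurable_continuous_onI[OF cont] by simp
  ultimately show ?thesis unfolding L2_def by simp
qed

lemma Cc_inf_imp_Cc: "Cc_inf \<phi> \<Longrightarrow> Cc \<phi>"
  using iter_pdiff.simps(1)[of \<phi>] unfolding Cc_inf_def smooth_def Cc_def by metis

definition cutoff :: "real \<Rightarrow> real \<Rightarrow> real ^ 'd::finite \<Rightarrow> real" where
  "cutoff l \<delta> z = (\<Prod>i\<in>UNIV. max 0 (min 1 ((l + \<delta> - \<bar>z $ i\<bar>) / \<delta>)))"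

lemma cutoff_bounds: "0 \<le> cutoff l \<delta> z" "cutoff l \<delta> z \<le> 1"
  unfolding cutoff_def by (auto intro: prod_nonneg prod_le_1)

lemma cutoff_eq_1: "\<delta> > 0 \<Longrightarrow> z \<in> cube l \<Longrightarrow> cutoff l \<delta> z = 1"
  unfolding cutoff_def cube_def by (intro prod.neutral) (auto simp: field_simps)

lemma cutoff_eq_0: "\<delta> > 0 \<Longrightarrow> z \<notin> cube (l + \<delta>) \<Longrightarrow> cutoff l \<delta> z = 0"
proof -
  assume "\<delta> > 0" "z \<notin> cube (l + \<delta>)"
  then obtain i where "l + \<delta> < \<bar>z $ i\<bar>" by (auto simp: cube_def not_le)
  then have "(l + \<delta> - \<bar>z $ i\<bar>) / \<delta> < 0" using \<open>\<delta> > 0\<close> by (simp add: divide_neg_pos)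
  then have "max 0 (min 1 ((l + \<delta> - \<bar>z $ i\<bar>) / \<delta>)) = 0" by simp
  then show ?thesis unfolding cutoff_def by (intro prod_zero) auto
qed

lemma Cc_cutoff:
  assumes "\<delta> > 0"
  shows "Cc (cutoff l \<delta> :: real ^ 'd::finite \<Rightarrow> real)"
proof -
  have "{z :: real ^ 'd. cutoff l \<delta> z \<noteq> 0} \<subseteq> cube (l + \<delta>)" using cutoff_eq_0[OF assms] by blast
  then have "bounded {z :: real ^ 'd. cutoff l \<delta> z \<noteq> 0}"
    using compact_imp_bounded[OF compact_cube] bounded_subset by blast
  moreover have "continuous_on UNIV (cutoff l \<delta> :: real ^ 'd \<Rightarrow> real)"
    unfolding cutoff_def divide_inverse
    by (intro continuous_intros continuous_on_component continuous_on_id)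
  ultimately show ?thesis unfolding Cc_def by simp
qed

lemma indicator_cube_le_cutoff: "\<delta> > 0 \<Longrightarrow> (indicator (cube l) z :: real) \<le> cutoff l \<delta> z"
  using cutoff_eq_1[of \<delta> z l] cutoff_bounds[of l \<delta> z] by (cases "z \<in> cube l") auto

lemma cutoff_le_indicator_cube: "\<delta> > 0 \<Longrightarrow> cutoff l \<delta> z \<le> (indicator (cube (l + \<delta>)) z :: real)"
  using cutoff_eq_0[of \<delta> z l] cutoff_bounds[of l \<delta> z] by (cases "z \<in> cube (l + \<delta>)") auto

text \<open>Outside \<open>cube R\<close> the decay gives \<open>h\<^sup>2 \<le> C/(1+R) \<cdot> prod_weight\<close>, so the part of \<open>h\<^sup>2\<close> not
  captured by the cut-off has lattice sums \<open>O(1/R)\<close>, uniformly in \<open>\<epsilon>\<close>.\<close>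
lemma eps_int_sq_le_truncation_plus_tail:
  fixes h :: "real ^ 'd::finite \<Rightarrow> real"
  assumes \<epsilon>: "0 < \<epsilon>" "\<epsilon> < 1" and "R \<ge> 0"
    and C: "C \<ge> 0" "\<And>z. (h z)^2 \<le> C * prod_weight z / (1 + norm z)"
  shows "eps_int \<omega> \<epsilon> (\<lambda>z. (h z)^2)
    \<le> eps_int \<omega> \<epsilon> (\<lambda>z. cutoff R 1 z * (h z)^2) + C / (1 + R) * 3 ^ CARD('d)"
proof -
  define g where "g z = cutoff R 1 z * (h z)^2" for z
  define t where "t z = (1 - cutoff R 1 z) * (h z)^2" for z
  have t: "0 \<le> t z" "t z \<le> C / (1 + R) * prod_weight z" for z
  proof -
    show "0 \<le> t z" unfolding t_def using cutoff_bounds(2)[of R 1 z] by simp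
    show "t z \<le> C / (1 + R) * prod_weight z"
    proof (cases "z \<in> cube R")
      case True
      then show ?thesis using cutoff_eq_1[of 1 z] C(1) prod_weight_nonneg[of z] \<open>R \<ge> 0\<close> by (simp add: t_def)
    next
      case False
      have "t z \<le> (h z)^2"
        unfolding t_def using cutoff_bounds[of R 1 z] by (intro mult_left_le_one_le) auto
      also have "\<dots> \<le> C / (1 + R) * prod_weight z"
        by (rule prod_weight_tail_bounds(2)[OF C \<open>R \<ge> 0\<close> False])
      finally show ?thesis .
    qed
  qed
  have "(\<lambda>x. g (\<epsilon> *\<^sub>R emb x)) summable_on Cinf \<omega>"
    by (rule summable_on_lattice_if_vanishes_outside_cube[where r = "R + 1", OF \<epsilon>(1)])
      (simp add: g_def cutoff_eq_0)
  moreover have "(\<lambda>x. t (\<epsilon> *\<^sub>R emb x)) summable_on Cinf \<omega>"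
    by (rule summable_on_lattice_if_le_prod_weight[OF \<epsilon>(1) t])
  moreover have "(h z)^2 = g z + t z" for z by (simp add: g_def t_def algebra_simps)
  ultimately have "eps_int \<omega> \<epsilon> (\<lambda>z. (h z)^2) = eps_int \<omega> \<epsilon> g + eps_int \<omega> \<epsilon> t"
    unfolding eps_int_def by (simp add: infsum_add distrib_left)
  also have "eps_int \<omega> \<epsilon> t \<le> C / (1 + R) * 3 ^ CARD('d)"
    using \<epsilon> C(1) \<open>R \<ge> 0\<close> by (intro eps_int_le_if_le_prod_weight t) auto
  finally show ?thesis by (simp add: g_def)
qed

lemma eps_int_limit_mono:
  fixes f g :: "real ^ 'd::finite \<Rightarrow> real" and \<omega> :: "'d env"
  assumes "((\<lambda>\<epsilon>. eps_int \<omega> \<epsilon> f) \<longlongrightarrow> a) (at_right 0)" "((\<lambda>\<epsilon>. eps_int \<omega> \<epsilon> g) \<longlongrightarrow> b) (at_right 0)"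
    and "\<And>z. f z \<le> g z" "\<And>z. z \<notin> cube r \<Longrightarrow> f z = 0" "\<And>z. z \<notin> cube s \<Longrightarrow> g z = 0"
  shows "a \<le> b"
proof (rule tendsto_le[OF trivial_limit_at_right_real assms(2,1)])
  show "eventually (\<lambda>\<epsilon>. eps_int \<omega> \<epsilon> f \<le> eps_int \<omega> \<epsilon> g) (at_right 0)"
    using eventually_at_right_less
  proof (rule eventually_mono)
    fix \<epsilon> :: real assume "\<epsilon> > 0"
    have "(\<lambda>x. f (\<epsilon> *\<^sub>R emb x)) summable_on Cinf \<omega>"
      using assms(4) by (rule summable_on_lattice_if_vanishes_outside_cube[OF \<open>\<epsilon> > 0\<close>])
    moreover have "(\<lambda>x. g (\<epsilon> *\<^sub>R emb x)) summable_on Cinf \<omega>"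
      using assms(5) by (rule summable_on_lattice_if_vanishes_outside_cube[OF \<open>\<epsilon> > 0\<close>])
    ultimately show "eps_int \<omega> \<epsilon> f \<le> eps_int \<omega> \<epsilon> g" by (rule eps_int_mono[OF \<open>\<epsilon> > 0\<close> _ _ assms(3)])
  qed
qed

section \<open>Consequences of \<open>\<omega> \<in> \<Omega>\<^sub>1\<close>\<close>

lemma Omega1_eps_int_Cc_muQ:
  assumes "\<omega> \<in> Omega1 Q c0" "Cc g"
  shows "((\<lambda>\<epsilon>. eps_int \<omega> \<epsilon> g) \<longlongrightarrow> (LINT z|lborel. g z) * (LINT \<omega>'|muQ Q c0. 1)) (at_right 0)"
proof -
  have "((\<lambda>\<epsilon>. eps_int_sh \<omega> \<epsilon> (\<lambda>z \<omega>'. g z * 1))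
           \<longlongrightarrow> (LINT z|lborel. g z) * (LINT \<omega>'|muQ Q c0. 1)) (at_right 0)"
    using assms unfolding Omega1_def by (blast intro: continuous_on_const)
  moreover have "eps_int_sh \<omega> \<epsilon> (\<lambda>z \<omega>'. g z * 1) = eps_int \<omega> \<epsilon> g" for \<epsilon>
    by (simp add: eps_int_sh_def eps_int_def)
  ultimately show ?thesis by simp
qed

lemma Omega1_eps_int_cube:
  fixes \<omega> :: "('d::finite) env"
  assumes "\<omega> \<in> Omega1 Q c0" "l > 0"
  shows "((\<lambda>\<epsilon>. eps_int \<omega> \<epsilon> (indicator (cube l))) \<longlongrightarrow> mdens Q c0 * (2 * l) ^ CARD('d)) (at_right 0)"
proof -
  have "\<forall>l>0. ((\<lambda>\<epsilon>. eps_int \<omega> \<epsilon> (indicator (cube l))) \<longlongrightarrow> mdens Q c0 * (2 * l) ^ CARD('d)) (at_right 0)"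
    using assms(1) unfolding Omega1_def mem_Collect_eq by (elim conjE)
  then show ?thesis using assms(2) by blast
qed

text \<open>Measurability of \<open>{0 \<in> \<C>(\<omega>)}\<close> is not available, so the total mass of \<open>\<mu>\<close> is identified
  with \<open>m\<close> by comparing the two limits in the definition of \<open>\<Omega>\<^sub>1\<close> on a cut-off of the unit cube.\<close>
lemma Omega1_total_mass_muQ_le:
  fixes \<omega> :: "('d::finite) env"
  assumes "\<omega> \<in> Omega1 Q c0" "\<delta> > 0"
  shows "(LINT \<omega>'|muQ Q c0. 1) * 2 ^ CARD('d) \<le> mdens Q c0 * (2 * (1 + \<delta>)) ^ CARD('d)"
    and "mdens Q c0 * 2 ^ CARD('d) \<le> (LINT \<omega>'|muQ Q c0. 1) * (2 * (1 + \<delta>)) ^ CARD('d)"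
proof -
  let ?K = "LINT \<omega>'|muQ Q c0. (1::real)" and ?m = "mdens Q c0"
  let ?J = "LINT z|lborel. (cutoff 1 \<delta> :: real ^ 'd \<Rightarrow> real) z"
  have K: "?K \<ge> 0" by (rule integral_nonneg_AE) simp
  have lim_inner: "((\<lambda>\<epsilon>. eps_int \<omega> \<epsilon> (indicator (cube 1))) \<longlongrightarrow> ?m * 2 ^ CARD('d)) (at_right 0)"
    and lim_outer: "((\<lambda>\<epsilon>. eps_int \<omega> \<epsilon> (indicator (cube (1 + \<delta>))))
        \<longlongrightarrow> ?m * (2 * (1 + \<delta>)) ^ CARD('d)) (at_right 0)"
    using Omega1_eps_int_cube[OF assms(1), of 1] Omega1_eps_int_cube[OF assms(1), of "1 + \<delta>"] assms(2)
    by auto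
  have lim_cutoff: "((\<lambda>\<epsilon>. eps_int \<omega> \<epsilon> (cutoff 1 \<delta>)) \<longlongrightarrow> ?J * ?K) (at_right 0)"
    by (rule Omega1_eps_int_Cc_muQ[OF assms(1) Cc_cutoff[OF assms(2)]])
  have lower: "?m * 2 ^ CARD('d) \<le> ?J * ?K"
    by (rule eps_int_limit_mono[where r = 1 and s = "1 + \<delta>", OF lim_inner lim_cutoff indicator_cube_le_cutoff[OF assms(2)]])
      (simp_all add: cutoff_eq_0[OF assms(2)])
  have upper: "?J * ?K \<le> ?m * (2 * (1 + \<delta>)) ^ CARD('d)"
    by (rule eps_int_limit_mono[where r = "1 + \<delta>" and s = "1 + \<delta>", OF lim_cutoff lim_outer cutoff_le_indicator_cube[OF assms(2)]])
      (simp_all add: cutoff_eq_0[OF assms(2)])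
  have cutoff_integrable: "integrable lborel (cutoff 1 \<delta> :: real ^ 'd \<Rightarrow> real)"
    by (rule Cc_imp_integrable[OF Cc_cutoff[OF assms(2)]])
  have "(2::real) ^ CARD('d) = (LINT z|lborel. indicator (cube 1 :: (real ^ 'd) set) z)"
    using integral_indicator_cube[where 'd='d, of 1] by simp
  also have "\<dots> \<le> ?J"
    by (rule integral_mono[OF integrable_indicator_cube cutoff_integrable indicator_cube_le_cutoff[OF assms(2)]])
  finally have "2 ^ CARD('d) * ?K \<le> ?J * ?K" by (rule mult_right_mono[OF _ K])
  then show "?K * 2 ^ CARD('d) \<le> ?m * (2 * (1 + \<delta>)) ^ CARD('d)"
    by (subst mult.commute) (rule order_trans[OF _ upper])
  have "?J \<le> (LINT z|lborel. indicator (cube (1 + \<delta>) :: (real ^ 'd) set) z)"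
    by (rule integral_mono[OF cutoff_integrable integrable_indicator_cube cutoff_le_indicator_cube[OF assms(2)]])
  also have "\<dots> = (2 * (1 + \<delta>)) ^ CARD('d)"
    using integral_indicator_cube[where 'd='d, of "1 + \<delta>"] assms(2) by simp
  finally have "?J * ?K \<le> (2 * (1 + \<delta>)) ^ CARD('d) * ?K" by (rule mult_right_mono[OF _ K])
  then show "?m * 2 ^ CARD('d) \<le> ?K * (2 * (1 + \<delta>)) ^ CARD('d)"
    by (subst (2) mult.commute) (rule order_trans[OF lower])
qed

lemma Omega1_total_mass_muQ:
  fixes \<omega> :: "('d::finite) env"
  assumes "\<omega> \<in> Omega1 Q c0"
  shows "(LINT \<omega>'|muQ Q c0. 1) = mdens Q c0"
proof -
  let ?K = "LINT \<omega>'|muQ Q c0. (1::real)" and ?m = "mdens Q c0"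
  have lim: "((\<lambda>\<delta>. a * (2 * (1 + \<delta>)) ^ CARD('d)) \<longlongrightarrow> a * 2 ^ CARD('d)) (at_right 0)" for a :: real
    by (rule tendsto_eq_intros refl | simp)+
  have "?K * 2 ^ CARD('d) \<le> ?m * 2 ^ CARD('d)"
    by (rule tendsto_le[OF trivial_limit_at_right_real lim tendsto_const])
      (rule eventually_mono[OF eventually_at_right_less Omega1_total_mass_muQ_le(1)[OF assms]])
  moreover have "?m * 2 ^ CARD('d) \<le> ?K * 2 ^ CARD('d)"
    by (rule tendsto_le[OF trivial_limit_at_right_real lim tendsto_const])
      (rule eventually_mono[OF eventually_at_right_less Omega1_total_mass_muQ_le(2)[OF assms]])
  ultimately show ?thesis by simp
qed

lemma Omega1_eps_int_Cc:
  assumes "\<omega> \<in> Omega1 Q c0" "Cc g"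
  shows "((\<lambda>\<epsilon>. eps_int \<omega> \<epsilon> g) \<longlongrightarrow> mdens Q c0 * (LINT z|lborel. g z)) (at_right 0)"
  using Omega1_eps_int_Cc_muQ[OF assms] Omega1_total_mass_muQ[OF assms(1)] by (simp add: mult.commute)

lemma eventually_at_right_0_lt_1: "eventually (\<lambda>\<epsilon>::real. 0 < \<epsilon> \<and> \<epsilon> < 1) (at_right 0)"
  by (simp add: eventually_at_right_field) (meson zero_less_one)

lemma Omega1_limsup_eps_int_sq_le:
  fixes h :: "real ^ 'd::finite \<Rightarrow> real"
  assumes om: "\<omega> \<in> Omega1 Q c0" and h: "continuous_on UNIV h" "integrable lborel (\<lambda>z. (h z)^2)"
    and C: "C \<ge> 0" "\<And>z. (h z)^2 \<le> C * prod_weight z / (1 + norm z)" and "\<eta> > 0"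
  shows "eventually (\<lambda>\<epsilon>. eps_int \<omega> \<epsilon> (\<lambda>z. (h z)^2) < mdens Q c0 * (LINT z|lborel. (h z)^2) + \<eta>)
           (at_right 0)"
proof -
  let ?m = "mdens Q c0"
  obtain R :: nat where "2 * C * 3 ^ CARD('d) / \<eta> < real R" using reals_Archimedean2 by blast
  then have tail_small: "C / (1 + real R) * 3 ^ CARD('d) < \<eta> / 2"
    using \<open>\<eta> > 0\<close> C(1) by (simp add: field_simps)
  define g where "g z = cutoff (real R) 1 z * (h z)^2" for z
  have g: "Cc g" unfolding g_def using h(1) by (intro Cc_mult_continuous Cc_cutoff continuous_intros) auto
  have "?m * (LINT z|lborel. g z) \<le> ?m * (LINT z|lborel. (h z)^2)"
    using cutoff_bounds[of "real R" 1] unfolding mdens_def g_def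
    by (intro mult_left_mono integral_mono Cc_imp_integrable[OF g[unfolded g_def]] h(2))
      (auto intro!: mult_left_le_one_le)
  then have eventually_g: "eventually (\<lambda>\<epsilon>. eps_int \<omega> \<epsilon> g < ?m * (LINT z|lborel. (h z)^2) + \<eta> / 2) (at_right 0)"
    using order_tendstoD(2)[OF Omega1_eps_int_Cc[OF om g], of "?m * (LINT z|lborel. g z) + \<eta> / 2"]
      \<open>\<eta> > 0\<close> by (auto elim: eventually_mono)
  show ?thesis using eventually_g eventually_at_right_0_lt_1
  proof eventually_elim
    case (elim \<epsilon>)
    then have "eps_int \<omega> \<epsilon> (\<lambda>z. (h z)^2) \<le> eps_int \<omega> \<epsilon> g + C / (1 + real R) * 3 ^ CARD('d)"
      unfolding g_def by (intro eps_int_sq_le_truncation_plus_tail C) auto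
    with elim tail_small show ?case by linarith
  qed
qed

lemma weak_conv_const_Cc_inf:
  assumes "\<omega> \<in> Omega1 Q c0" "Cc_inf \<phi>"
  shows "weak_conv (mdens Q c0) \<omega> (\<lambda>_. \<phi>) \<phi>"
proof -
  have \<phi>: "Cc \<phi>" "continuous_on UNIV \<phi>" using Cc_inf_imp_Cc[OF assms(2)] by (auto simp: Cc_def)
  have "Cc (\<lambda>z. (\<phi> z)^2)" using Cc_mult_continuous(1)[OF \<phi>] by (simp add: power2_eq_square)
  then have lim: "((\<lambda>\<epsilon>. eps_int \<omega> \<epsilon> (\<lambda>z. (\<phi> z)^2)) \<longlongrightarrow> mdens Q c0 * (LINT x|lborel. (\<phi> x)^2)) (at_right 0)"
    by (rule Omega1_eps_int_Cc[OF assms(1)])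
  have "eventually (\<lambda>\<epsilon>. eps_int \<omega> \<epsilon> (\<lambda>z. (\<phi> z)^2) \<le> mdens Q c0 * (LINT x|lborel. (\<phi> x)^2) + 1)
      (at_right 0)"
    using order_tendstoD(2)[OF lim, of "mdens Q c0 * (LINT x|lborel. (\<phi> x)^2) + 1"]
    by (auto elim: eventually_mono)
  then have "\<exists>B. eventually (\<lambda>\<epsilon>. eps_int \<omega> \<epsilon> (\<lambda>z. (\<phi> z)^2) \<le> B) (at_right 0)" by blast
  moreover have "((\<lambda>\<epsilon>. eps_int \<omega> \<epsilon> (\<lambda>z. \<phi> z * \<psi> z)) \<longlongrightarrow> mdens Q c0 * (LINT x|lborel. \<phi> x * \<psi> x)) (at_right 0)"
    if "Cc_inf \<psi>" for \<psi>
    using Cc_inf_imp_Cc[OF that] by (intro Omega1_eps_int_Cc assms Cc_mult_continuous(1)[OF \<phi>(1)])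
      (simp add: Cc_def)
  ultimately show ?thesis unfolding weak_conv_def using Cc_imp_L2eps[OF \<phi>(1)] Cc_imp_L2[OF \<phi>(1)] by auto
qed

lemma weak_conv_if_strong_conv:
  assumes "\<omega> \<in> Omega1 Q c0" "strong_conv (mdens Q c0) \<omega> g\<epsilon> g"
  shows "weak_conv (mdens Q c0) \<omega> g\<epsilon> g"
proof -
  have "\<forall>\<epsilon>>0. L2eps \<omega> \<epsilon> (g\<epsilon> \<epsilon>)"
    and "\<exists>B. eventually (\<lambda>\<epsilon>. eps_int \<omega> \<epsilon> (\<lambda>z. (g\<epsilon> \<epsilon> z)^2) \<le> B) (at_right 0)"
    and "L2 lborel g"
    and test: "\<And>\<phi>\<epsilon> \<phi>. weak_conv (mdens Q c0) \<omega> \<phi>\<epsilon> \<phi> \<Longrightarrow>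
        ((\<lambda>\<epsilon>. eps_int \<omega> \<epsilon> (\<lambda>z. g\<epsilon> \<epsilon> z * \<phi>\<epsilon> \<epsilon> z)) \<longlongrightarrow> mdens Q c0 * (LINT x|lborel. g x * \<phi> x)) (at_right 0)"
    using assms(2) unfolding strong_conv_def by blast+
  then show ?thesis
    unfolding weak_conv_def using test[OF weak_conv_const_Cc_inf[OF assms(1)]] by blast
qed

lemma L2eps_if_sq_le_prod_weight:
  fixes h :: "real ^ 'd::finite \<Rightarrow> real"
  assumes "\<epsilon> > 0" "\<And>z. (h z)^2 \<le> C * prod_weight z"
  shows "L2eps \<omega> \<epsilon> h"
  unfolding L2eps_def using assms(2) by (intro summable_on_lattice_if_le_prod_weight[OF assms(1)]) auto

lemma weak_conv_const_if_sq_le_prod_weight: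
  fixes h :: "real ^ 'd::finite \<Rightarrow> real"
  assumes om: "\<omega> \<in> Omega1 Q c0" and h: "continuous_on UNIV h" "L2 lborel h"
    and C: "C \<ge> 0" "\<And>z. (h z)^2 \<le> C * prod_weight z"
  shows "weak_conv (mdens Q c0) \<omega> (\<lambda>_. h) h"
proof -
  have "eventually (\<lambda>\<epsilon>. eps_int \<omega> \<epsilon> (\<lambda>z. (h z)^2) \<le> C * 3 ^ CARD('d)) (at_right 0)"
    using eventually_at_right_0_lt_1
    by (rule eventually_mono) (auto intro: eps_int_le_if_le_prod_weight C)
  moreover have "((\<lambda>\<epsilon>. eps_int \<omega> \<epsilon> (\<lambda>z. h z * \<phi> z)) \<longlongrightarrow> mdens Q c0 * (LINT x|lborel. h x * \<phi> x)) (at_right 0)"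
    if "Cc_inf \<phi>" for \<phi>
    by (intro Omega1_eps_int_Cc om Cc_mult_continuous(2) Cc_inf_imp_Cc that h(1))
  ultimately show ?thesis unfolding weak_conv_def using h(2) L2eps_if_sq_le_prod_weight[OF _ C(2)] by blast
qed

lemma infsum_square_diff:
  fixes p q :: "'a \<Rightarrow> real"
  assumes p: "(\<lambda>x. (p x)^2) summable_on A" and q: "(\<lambda>x. (q x)^2) summable_on A"
  shows "infsum (\<lambda>x. (p x - q x)^2) A
         = infsum (\<lambda>x. (p x)^2) A - 2 * infsum (\<lambda>x. p x * q x) A + infsum (\<lambda>x. (q x)^2) A"
proof -
  have "(\<lambda>x. (p x)^2 + (q x)^2) summable_on A" by (intro summable_on_add p q)
  then have "(\<lambda>x. \<bar>p x * q x\<bar>) summable_on A"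
  proof (rule summable_on_comparison_test)
    fix x
    have "2 * (\<bar>p x\<bar> * \<bar>q x\<bar>) \<le> (p x)^2 + (q x)^2"
      using sum_squares_bound[of "\<bar>p x\<bar>" "\<bar>q x\<bar>"] by (simp add: mult.assoc)
    moreover have "0 \<le> \<bar>p x\<bar> * \<bar>q x\<bar>" by simp
    ultimately show "\<bar>p x * q x\<bar> \<le> (p x)^2 + (q x)^2" unfolding abs_mult by linarith
  qed simp
  then have "(\<lambda>x. p x * q x) summable_on A"
    by (simp add: summable_on_iff_abs_summable_on_real[of "\<lambda>x. p x * q x"])
  then have pq: "(\<lambda>x. (-2) * (p x * q x)) summable_on A" by (rule summable_on_cmult_right)
  have "(\<lambda>x. (p x - q x)^2) = (\<lambda>x. (p x)^2 + ((-2) * (p x * q x) + (q x)^2))"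
    by (auto simp: power2_eq_square algebra_simps)
  then have "infsum (\<lambda>x. (p x - q x)^2) A
      = infsum (\<lambda>x. (p x)^2) A + (infsum (\<lambda>x. (-2) * (p x * q x)) A + infsum (\<lambda>x. (q x)^2) A)"
    by (simp only: infsum_add[OF p summable_on_add[OF pq q]] infsum_add[OF pq q])
  then show ?thesis using infsum_cmult_right'[of "-2" "\<lambda>x. p x * q x" A] by simp
qed

lemma eps_int_square_diff:
  assumes "L2eps \<omega> \<epsilon> f" "L2eps \<omega> \<epsilon> g"
  shows "eps_int \<omega> \<epsilon> (\<lambda>z. (f z - g z)^2)
    = eps_int \<omega> \<epsilon> (\<lambda>z. (f z)^2) - 2 * eps_int \<omega> \<epsilon> (\<lambda>z. f z * g z) + eps_int \<omega> \<epsilon> (\<lambda>z. (g z)^2)"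
  using assms unfolding eps_int_def L2eps_def by (simp add: infsum_square_diff algebra_simps)

lemma eps_int_nonneg: "\<epsilon> > 0 \<Longrightarrow> (\<And>z. 0 \<le> g z) \<Longrightarrow> 0 \<le> eps_int \<omega> \<epsilon> g"
  unfolding eps_int_def by (intro mult_nonneg_nonneg infsum_nonneg) auto

lemma tendsto_zero_if_expansion:
  fixes G a b c :: "'a \<Rightarrow> real"
  assumes "eventually (\<lambda>x. G x = a x - 2 * b x + c x \<and> 0 \<le> G x) F"
    and "(a \<longlongrightarrow> A) F" "(b \<longlongrightarrow> A) F" "\<And>\<eta>. \<eta> > 0 \<Longrightarrow> eventually (\<lambda>x. c x < A + \<eta>) F"
  shows "(G \<longlongrightarrow> 0) F"
proof (rule order_tendstoI)
  show "eventually (\<lambda>x. y < G x) F" if "y < 0" for y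
    using assms(1) that by (auto elim: eventually_mono)
  show "eventually (\<lambda>x. G x < y) F" if "0 < y" for y
  proof -
    have "eventually (\<lambda>x. a x < A + y / 4) F" "eventually (\<lambda>x. A - y / 4 < b x) F"
      "eventually (\<lambda>x. c x < A + y / 4) F"
      using that order_tendstoD[OF assms(2)] order_tendstoD[OF assms(3)] assms(4) by auto
    with assms(1) show ?thesis by eventually_elim linarith
  qed
qed

theorem mainTheorem13:
  fixes Q :: "('d::finite) env measure" and c0 :: real
    and \<psi> :: "nat \<Rightarrow> 'd env \<times> (int ^ 'd) \<Rightarrow> real"
    and f :: "nat \<Rightarrow> int ^ 'd \<Rightarrow> nat \<Rightarrow> 'd env \<Rightarrow> real"
    and \<omega> :: "'d env"
    and h :: "real ^ 'd \<Rightarrow> real" and h\<epsilon> :: "real \<Rightarrow> real ^ 'd \<Rightarrow> real"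
  assumes dim: "CARD('d) \<ge> 2"
    and c0: "c0 > 0"
    and Q_prob: "prob_space Q"
    and Q_sets: "sets Q = sets (OmegaM c0)"
    and Q_inv: "\<forall>x. shift x \<in> measurable Q Q \<and> distr Q Q (shift x) = Q"
    and Q_erg: "\<forall>A\<in>sets Q. (\<forall>x. shift x -` A \<inter> space Q = A) \<longrightarrow>
                   measure Q A = 0 \<or> measure Q A = 1"
    and Q_Omega0: "measure Q (Omega0 c0) = 1"
    and psi_sol: "\<forall>j. \<psi> j \<in> L2sol Q c0"
    and psi_dense: "\<forall>v\<in>L2sol Q c0. \<forall>\<delta>>0. \<exists>j.
                      (LINT z|Mmeas Q c0. (v z - \<psi> j z)^2) < \<delta>"
    and f_cont: "\<forall>j. \<forall>e\<in>unitB. \<forall>k. continuous_on (Omega c0) (f j e k)"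
    and f_approx: "\<forall>j. \<forall>e\<in>unitB.
                     (\<lambda>k. LINT \<omega>'|muQ Q c0. (f j e k \<omega>' - Psi \<psi> j e \<omega>')^2) \<longlonglongrightarrow> 0"
    and \<omega>_reg: "\<omega> \<in> OmegaStar Q c0 \<psi> f"
    and h_cont: "continuous_on UNIV h"
    and h_decay: "\<exists>c. \<forall>x. \<bar>h x\<bar> \<le> c / (1 + norm x ^ (CARD('d) + 1))"
    and h_strong: "strong_conv (mdens Q c0) \<omega> h\<epsilon> h"
  shows "((\<lambda>\<epsilon>. eps_int \<omega> \<epsilon> (\<lambda>x. (h\<epsilon> \<epsilon> x - h x)^2)) \<longlongrightarrow> 0) (at_right 0)"
proof -
  let ?m = "mdens Q c0"
  have om: "\<omega> \<in> Omega1 Q c0" using \<omega>_reg unfolding OmegaStar_def by blast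
  obtain C where C: "C \<ge> 0" "\<And>z. (h z)^2 \<le> C * prod_weight z / (1 + norm z)"
    using h_decay sq_le_prod_weight_if_decay by metis
  note hC = prod_weight_tail_bounds(1)[OF C]
  have L2_h: "L2 lborel h" and L2eps_h\<epsilon>: "\<And>\<epsilon>. \<epsilon> > 0 \<Longrightarrow> L2eps \<omega> \<epsilon> (h\<epsilon> \<epsilon>)"
    and test: "\<And>\<phi>\<epsilon> \<phi>. weak_conv ?m \<omega> \<phi>\<epsilon> \<phi> \<Longrightarrow>
        ((\<lambda>\<epsilon>. eps_int \<omega> \<epsilon> (\<lambda>z. h\<epsilon> \<epsilon> z * \<phi>\<epsilon> \<epsilon> z)) \<longlongrightarrow> ?m * (LINT x|lborel. h x * \<phi> x)) (at_right 0)"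
    using h_strong unfolding strong_conv_def by blast+
  have "((\<lambda>\<epsilon>. eps_int \<omega> \<epsilon> (\<lambda>z. (h\<epsilon> \<epsilon> z)^2)) \<longlongrightarrow> ?m * (LINT x|lborel. (h x)^2)) (at_right 0)"
    using test[OF weak_conv_if_strong_conv[OF om h_strong]] by (simp add: power2_eq_square)
  moreover have "((\<lambda>\<epsilon>. eps_int \<omega> \<epsilon> (\<lambda>z. h\<epsilon> \<epsilon> z * h z)) \<longlongrightarrow> ?m * (LINT x|lborel. (h x)^2)) (at_right 0)"
    using test[OF weak_conv_const_if_sq_le_prod_weight[OF om h_cont L2_h C(1) hC]] by (simp add: power2_eq_square)
  moreover have "eventually (\<lambda>\<epsilon>. eps_int \<omega> \<epsilon> (\<lambda>z. (h z)^2) < ?m * (LINT x|lborel. (h x)^2) + \<eta>) (at_right 0)"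
    if "\<eta> > 0" for \<eta>
    using L2_h unfolding L2_def
    by (intro Omega1_limsup_eps_int_sq_le[OF om h_cont _ C that]) auto
  moreover have "eventually (\<lambda>\<epsilon>. eps_int \<omega> \<epsilon> (\<lambda>x. (h\<epsilon> \<epsilon> x - h x)^2)
      = eps_int \<omega> \<epsilon> (\<lambda>z. (h\<epsilon> \<epsilon> z)^2) - 2 * eps_int \<omega> \<epsilon> (\<lambda>z. h\<epsilon> \<epsilon> z * h z) + eps_int \<omega> \<epsilon> (\<lambda>z. (h z)^2)
      \<and> 0 \<le> eps_int \<omega> \<epsilon> (\<lambda>x. (h\<epsilon> \<epsilon> x - h x)^2)) (at_right 0)"
    using eventually_at_right_less
    by (rule eventually_mono) (auto intro: eps_int_square_diff L2eps_h\<epsilon> L2eps_if_sq_le_prod_weight hC eps_int_nonneg)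
  ultimately show ?thesis by (intro tendsto_zero_if_expansion)
qed

end
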